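(* For every integer $n\ge1$, \[ -\omega(n)=\sum_{\substack{m+k=n\\ m\ge1,\ k\ge0}}p_\psi(m)\,\Omega_m(k). \]
   Context: $p_\psi(n)$ is the number of relatively prime partitions of $n$, i.e. partitions of $n$ whose parts have greatest common divisor $1$. $\omega:\mathbb{Z}\to\mathbb{Z}$ is defined by $\omega(0)=1$; $\omega(m)=(-1)^j$ if $m=\frac{3j^2\pm j}{2}$ for some integer $j\ge1$; $\omega(m)=0$ otherwise (in particular for $m<0$). For $m\ge1$ and integer $k$, $\Omega_m(k)=\sum_{j\ge0}\omega(k-jm)=\omega(k)+\omega(k-m)+\omega(k-2m)+\cdots$. *)

theory Defs
  imports Main "HOL-Library.Multiset"
begin

definition int_partitions :: "nat \<Rightarrow> nat multiset set" where
  "int_partitions n = {P. (\<forall>x\<in>#P. 0 < x) \<and> sum_mset P = n}"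

definition p_psi :: "nat \<Rightarrow> nat" where
  "p_psi n = card {P \<in> int_partitions n. Gcd (set_mset P) = 1}"

definition pent :: "int \<Rightarrow> nat \<Rightarrow> bool" where
  "pent m j \<longleftrightarrow> 1 \<le> j \<and> (2 * m = 3 * int j ^ 2 + int j \<or> 2 * m = 3 * int j ^ 2 - int j)"

definition omega :: "int \<Rightarrow> int" where
  "omega m = (if m = 0 then 1
              else if \<exists>j. pent m j \<and> even j then 1
              else if \<exists>j. pent m j \<and> odd j then -1
              else 0)"

text \<open>Omega_m(k) = sum_{j>=0} omega(k - j m); terms with j > k vanish
  (argument negative since m >= 1), so the sum is finite.\<close>
definition Omega :: "nat \<Rightarrow> int \<Rightarrow> int" where
  "Omega m k = (\<Sum>j\<le>nat k. omega (k - int j * int m))"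

end

(*
  Shanks' finite identity shows that the coefficients of X^m, m <= n, in the product
  (1 - X)(1 - X^2)...(1 - X^n) are omega(m) (Euler's pentagonal number theorem).  Multiplying by
  the product of the series 1/(1 - X^i), whose coefficients count partitions with parts at most n,
  gives Euler's recurrence: the sum of omega(n - d) p(d) over 0 <= d <= n vanishes for n >= 1.
  Grouping the partitions of d by the gcd of their parts gives p(d) = sum of p_psi(m) over m | d,
  and Omega_m(n - m) is the sum of omega(n - d) over the multiples d <= n of m; substituting both
  and exchanging the order of summation yields the theorem.
*)
theory Submission
  imports Defs "HOL-Computational_Algebra.Formal_Power_Series"
begin

unbundle fps_syntax

section \<open>Pentagonal numbers and the function omega\<close>

definition triangular :: "nat \<Rightarrow> nat" where
  "triangular k = k * (k + 1) div 2"

lemma two_triangular: "2 * triangular k = k * (k + 1)"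
  unfolding triangular_def by simp

lemma triangular_0 [simp]: "triangular 0 = 0"
  by (simp add: triangular_def)

lemma triangular_Suc: "triangular (Suc k) = triangular k + Suc k"
  using two_triangular[of k] two_triangular[of "Suc k"] by simp

lemma triangular_mono: "a \<le> b \<Longrightarrow> triangular a \<le> triangular b"
  unfolding triangular_def by (intro div_le_mono mult_le_mono) auto

definition pent_minus :: "nat \<Rightarrow> nat" where
  "pent_minus j = j * j + triangular (j - 1)"

definition pent_plus :: "nat \<Rightarrow> nat" where
  "pent_plus j = j * j + triangular j"

lemma two_pent_minus: "2 * pent_minus j + j = 3 * j * j"
  using two_triangular[of "j - 1"] by (cases j) (simp_all add: pent_minus_def algebra_simps)

lemma two_pent_plus: "2 * pent_plus j = 3 * j * j + j"
  using two_triangular[of j] by (simp add: pent_plus_def algebra_simps)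

lemma pent_iff: "pent (int m) j \<longleftrightarrow> 1 \<le> j \<and> (m = pent_minus j \<or> m = pent_plus j)"
proof -
  have "2 * int m = 3 * int j ^ 2 + int j \<longleftrightarrow> 2 * m = 3 * j * j + j"
    by (simp add: power2_eq_square flip: of_nat_mult of_nat_add) linarith
  moreover have "2 * int m = 3 * int j ^ 2 - int j \<longleftrightarrow> 2 * m + j = 3 * j * j"
    by (simp add: power2_eq_square flip: of_nat_mult of_nat_add) linarith
  ultimately show ?thesis
    unfolding pent_def using two_pent_minus[of j] two_pent_plus[of j] by auto
qed

lemma le_pent_minus: "j \<le> pent_minus j"
  by (simp add: pent_minus_def le_square trans_le_add1)

lemma pent_minus_less_pent_plus: "1 \<le> j \<Longrightarrow> pent_minus j < pent_plus j"
  by (cases j) (simp_all add: pent_minus_def pent_plus_def triangular_Suc)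

lemma pent_plus_less_pent_minus:
  assumes "j < j'"
  shows "pent_plus j < pent_minus j'"
proof -
  obtain i where j': "j' = Suc i" and "j \<le> i"
    using assms by (cases j') auto
  then have "j * j \<le> i * i" "triangular j \<le> triangular i"
    by (simp_all add: mult_le_mono triangular_mono)
  then show ?thesis
    unfolding pent_minus_def pent_plus_def j' by simp
qed

lemma pent_index_unique:
  assumes "1 \<le> j" "1 \<le> j'"
    and "m = pent_minus j \<or> m = pent_plus j" "m = pent_minus j' \<or> m = pent_plus j'"
  shows "j = j'"
proof -
  have "\<not> i < i'"
    if "1 \<le> i" "m = pent_minus i \<or> m = pent_plus i" "m = pent_minus i' \<or> m = pent_plus i'"
    for i i'
  proof
    assume "i < i'"
    then show False
      using that pent_plus_less_pent_minus[of i i'] pent_minus_less_pent_plus[of i]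
        pent_minus_less_pent_plus[of i'] by auto
  qed
  then show ?thesis
    using assms by (metis linorder_neqE_nat)
qed

lemma omega_pent:
  assumes "pent (int m) j"
  shows "omega (int m) = (-1) ^ j"
proof -
  have unique: "j' = j" if "pent (int m) j'" for j'
    using that assms pent_index_unique by (auto simp: pent_iff)
  have "m \<noteq> 0"
    using assms le_pent_minus[of j] pent_minus_less_pent_plus[of j] by (auto simp: pent_iff)
  then show ?thesis
    using assms by (cases "even j") (auto simp: omega_def dest: unique)
qed

lemma sum_pent_indicator:
  assumes "pent (int m) j" "m \<le> N"
  shows "(\<Sum>i=1..N. (-1) ^ i * (of_bool (m = pent_minus i) + of_bool (m = pent_plus i)))
    = ((-1) ^ j :: 'a::comm_ring_1)"
proof -
  have j1: "1 \<le> j" and m: "m = pent_minus j \<or> m = pent_plus j"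
    using assms(1) by (simp_all add: pent_iff)
  have "j \<le> N"
    using m le_pent_minus[of j] pent_minus_less_pent_plus[OF j1] assms(2) by auto
  have "(-1) ^ i * (of_bool (m = pent_minus i) + of_bool (m = pent_plus i)) =
      (if i = j then (-1) ^ j else (0 :: 'a))" if "1 \<le> i" for i
  proof (cases "i = j")
    case True
    then show ?thesis
      using m pent_minus_less_pent_plus[OF j1] by auto
  next
    case False
    then have "m \<noteq> pent_minus i" "m \<noteq> pent_plus i"
      using pent_index_unique[OF that j1 _ m] by blast+
    then show ?thesis
      using False by simp
  qed
  then have "(\<Sum>i=1..N. (-1) ^ i * (of_bool (m = pent_minus i) + of_bool (m = pent_plus i)))
      = (\<Sum>i=1..N. if i = j then (-1) ^ j else (0 :: 'a))"
    by (intro sum.cong) auto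
  also have "\<dots> = (-1) ^ j"
    using j1 \<open>j \<le> N\<close> by simp
  finally show ?thesis .
qed

lemma fps_nth_pentagonal_sum:
  assumes "m \<le> N"
  shows "(1 + (\<Sum>j=1..N. (-1) ^ j * (fps_X ^ pent_minus j + fps_X ^ pent_plus j))
      :: 'a::comm_ring_1 fps) $ m = of_int (omega (int m))"
proof -
  have "((-1) ^ j * f) $ m = (-1) ^ j * f $ m" for j and f :: "'a fps"
    by (cases "even j") simp_all
  then have coeff: "(1 + (\<Sum>j=1..N. (-1) ^ j * (fps_X ^ pent_minus j + fps_X ^ pent_plus j))
      :: 'a fps) $ m = of_bool (m = 0) +
        (\<Sum>i=1..N. (-1) ^ i * (of_bool (m = pent_minus i) + of_bool (m = pent_plus i)))"
    by (simp add: fps_sum_nth of_bool_def)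
  show ?thesis
  proof (cases "\<exists>j. pent (int m) j")
    case True
    then obtain j where j: "pent (int m) j" ..
    moreover have "m \<noteq> 0"
      using j le_pent_minus[of j] pent_minus_less_pent_plus[of j] by (auto simp: pent_iff)
    ultimately show ?thesis
      using coeff omega_pent[OF j] sum_pent_indicator[OF j assms] by simp
  next
    case False
    then have "(\<Sum>i=1..N. (-1) ^ i * (of_bool (m = pent_minus i) + of_bool (m = pent_plus i)))
        = (0 :: 'a)"
      by (intro sum.neutral) (auto simp: pent_iff)
    then show ?thesis
      using coeff False by (simp add: omega_def)
  qed
qed

lemma omega_neg:
  assumes "x < 0"
  shows "omega x = 0"
proof -
  have "\<not> pent x j" for j
  proof -
    have "int j \<le> int j ^ 2"
      by (simp add: power2_eq_square le_square flip: of_nat_mult)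
    then show ?thesis
      using assms unfolding pent_def by linarith
  qed
  then show ?thesis
    using assms by (simp add: omega_def)
qed

lemma Omega_eq_sum_multiples:
  assumes "1 \<le> m" "m \<le> n"
  shows "Omega m (int n - int m) = (\<Sum>d | d \<in> {1..n} \<and> m dvd d. omega (int n - int d))"
proof -
  have bound: "nat (int n - int m) = n - m"
    using assms(2) by simp
  have index_bound: "k - 1 \<le> n - m" if "k * m \<le> n" for k
  proof -
    have "k - 1 \<le> (k - 1) * m"
      using assms(1) by simp
    then show ?thesis
      using that by (simp add: diff_mult_distrib)
  qed
  txt \<open>Reindex by \<open>j \<mapsto> m (j + 1)\<close>; the indices with \<open>m (j + 1) > n\<close> contribute \<open>omega\<close> of a
    negative number.\<close>
  show ?thesis
    unfolding Omega_def bound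
    by (rule sum.reindex_bij_witness_not_neutral[where i = "\<lambda>d. d div m - 1" and j = "\<lambda>j. m * Suc j"
        and S' = "{j \<in> {..n - m}. n < m * Suc j}" and T' = "{}"])
      (use assms in \<open>auto elim!: dvdE intro!: omega_neg index_bound[simplified]
        simp: algebra_simps simp flip: of_nat_mult of_nat_add\<close>)
qed

section \<open>Shanks' identity and the pentagonal number theorem\<close>

text \<open>D. Shanks, A short proof of an identity of Euler, Proc. AMS 2 (1951): the sum of these terms
  over \<open>k \<le> n\<close> telescopes in \<open>n\<close>.\<close>

definition shanks_term :: "'a::comm_ring_1 \<Rightarrow> nat \<Rightarrow> nat \<Rightarrow> 'a" where
  "shanks_term x n k = (-1) ^ k * (\<Prod>i=Suc k..n. 1 - x ^ i) * x ^ (n * k + triangular k)"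

lemma shanks_term_Suc_diff:
  assumes "Suc k \<le> n"
  shows "shanks_term x (Suc n) (Suc k) - shanks_term x n (Suc k) =
    shanks_term x n k * x ^ (n + Suc k) - shanks_term x n (Suc k) * x ^ (n + Suc (Suc k))"
proof -
  define Q where "Q = (\<Prod>i=Suc (Suc k)..n. 1 - x ^ i)"
  define e where "e = n * k + triangular k"
  have prods: "(\<Prod>i=Suc (Suc k)..Suc n. 1 - x ^ i) = Q * (1 - x ^ Suc n)"
    "(\<Prod>i=Suc k..n. 1 - x ^ i) = (1 - x ^ Suc k) * Q"
    using assms by (simp_all add: Q_def prod.atLeast_Suc_atMost)
  have exps: "Suc n * Suc k + triangular (Suc k) = e + (n + Suc k) + Suc k"
    "n * Suc k + triangular (Suc k) = e + (n + Suc k)"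
    "n + Suc (Suc k) = Suc n + Suc k"
    by (simp_all add: e_def triangular_Suc)
  show ?thesis
    unfolding shanks_term_def prods Q_def[symmetric] exps e_def[symmetric] power_add
    by (simp add: algebra_simps)
qed

lemma sum_shanks_term_Suc_diff:
  assumes "m \<le> n"
  shows "(\<Sum>k\<le>m. shanks_term x (Suc n) k - shanks_term x n k) = - (shanks_term x n m * x ^ (n + Suc m))"
  using assms
proof (induction m)
  case 0
  then show ?case
    by (simp add: shanks_term_def algebra_simps)
next
  case (Suc m)
  then show ?case
    using shanks_term_Suc_diff[of m n x] by simp
qed

lemma shanks_identity:
  "(\<Sum>k\<le>n. shanks_term x n k) = 1 + (\<Sum>j=1..n. (-1) ^ j * (x ^ pent_minus j + x ^ pent_plus j))"
proof (induction n)
  case 0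
  then show ?case
    by (simp add: shanks_term_def)
next
  case (Suc n)
  have "(\<Sum>k\<le>Suc n. shanks_term x (Suc n) k) =
      (\<Sum>k\<le>n. shanks_term x n k) + (\<Sum>k\<le>n. shanks_term x (Suc n) k - shanks_term x n k)
      + shanks_term x (Suc n) (Suc n)"
    by (simp add: sum_subtractf)
  also have "(\<Sum>k\<le>n. shanks_term x (Suc n) k - shanks_term x n k) =
      - (shanks_term x n n * x ^ (n + Suc n))"
    by (simp add: sum_shanks_term_Suc_diff)
  also have "shanks_term x n n * x ^ (n + Suc n) = (-1) ^ n * x ^ pent_minus (Suc n)"
  proof -
    have "n * n + triangular n + (n + Suc n) = pent_minus (Suc n)"
      by (simp add: pent_minus_def)
    moreover have "shanks_term x n n * x ^ (n + Suc n) = (-1) ^ n * x ^ (n * n + triangular n + (n + Suc n))"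
      by (simp add: shanks_term_def power_add)
    ultimately show ?thesis
      by simp
  qed
  also have "shanks_term x (Suc n) (Suc n) = (-1) ^ Suc n * x ^ pent_plus (Suc n)"
    by (simp add: shanks_term_def pent_plus_def)
  finally show ?case
    using Suc.IH by (simp add: algebra_simps)
qed

lemma fps_nth_euler_product:
  fixes m n :: nat
  assumes "m \<le> n"
  shows "(\<Prod>i=1..n. 1 - fps_X ^ i :: 'a::comm_ring_1 fps) $ m = of_int (omega (int m))"
proof -
  let ?T = "\<lambda>k. shanks_term (fps_X :: 'a fps) n k $ m"
  have "?T k = 0" if "k \<in> {..n} - {0}" for k
  proof -
    have "n \<le> n * k" "1 \<le> triangular k"
      using that by (auto simp: triangular_Suc gr0_conv_Suc)
    then have "m < n * k + triangular k"
      using assms by linarith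
    then show ?thesis
      by (simp add: shanks_term_def fps_X_power_mult_right_nth)
  qed
  then have "(\<Prod>i=1..n. 1 - fps_X ^ i :: 'a fps) $ m = (\<Sum>k\<le>n. ?T k)"
    by (simp add: sum.remove[of "{..n}" 0] shanks_term_def)
  also have "\<dots> = (1 + (\<Sum>j=1..n. (-1) ^ j * (fps_X ^ pent_minus j + fps_X ^ pent_plus j))) $ m"
    unfolding fps_sum_nth[symmetric] shanks_identity ..
  also have "\<dots> = of_int (omega (int m))"
    using assms by (rule fps_nth_pentagonal_sum)
  finally show ?thesis .
qed

section \<open>Partitions with bounded parts\<close>

lemma member_le_sum_mset: "(x::nat) \<in># P \<Longrightarrow> x \<le> sum_mset P"
  by (simp add: sum_mset.remove)

lemma size_le_sum_mset: "(\<forall>x\<in>#P. (0::nat) < x) \<Longrightarrow> size P \<le> sum_mset P"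
  by (induction P) auto

lemma finite_int_partitions: "finite (int_partitions n)"
proof (rule finite_subset)
  show "int_partitions n \<subseteq> (\<Union>s\<le>n. multisets_of_size {1..n} s)"
    using member_le_sum_mset size_le_sum_mset
    by (fastforce simp: int_partitions_def multisets_of_size_def Suc_le_eq)
qed auto

lemma int_partitions_0: "int_partitions 0 = {{#}}"
proof -
  have "P \<in> int_partitions 0 \<longleftrightarrow> P = {#}" for P
    unfolding int_partitions_def by (cases P) auto
  then show ?thesis
    by auto
qed

definition bounded_partitions :: "nat \<Rightarrow> nat \<Rightarrow> nat multiset set" where
  "bounded_partitions N n = {P \<in> int_partitions n. \<forall>x\<in>#P. x \<le> N}"

lemma finite_bounded_partitions: "finite (bounded_partitions N n)"
  unfolding bounded_partitions_def using finite_int_partitions by simp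

lemma bounded_partitions_0: "bounded_partitions 0 n = (if n = 0 then {{#}} else {})"
proof -
  have "P \<in> bounded_partitions 0 n \<longleftrightarrow> P = {#} \<and> n = 0" for P
    unfolding bounded_partitions_def int_partitions_def by (cases P) auto
  then show ?thesis
    by auto
qed

lemma bounded_partitions_eq_int_partitions: "n \<le> N \<Longrightarrow> bounded_partitions N n = int_partitions n"
  unfolding bounded_partitions_def int_partitions_def using member_le_sum_mset by fastforce

lemma filter_mset_neq_plus_replicate_mset: "{#x \<in># P. x \<noteq> a#} + replicate_mset (count P a) a = P"
  using multiset_partition[of P "\<lambda>x. x \<noteq> a"] by (simp add: filter_eq_replicate_mset)

lemma bij_betw_bounded_partitions_Suc:
  "bij_betw (\<lambda>(i, Q). Q + replicate_mset ((n - i) div Suc N) (Suc N))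
     (SIGMA i:{i\<in>{0..n}. Suc N dvd n - i}. bounded_partitions N i) (bounded_partitions (Suc N) n)"
proof -
  define rest where "rest P = {#x \<in># P. x \<noteq> Suc N#}" for P
  show ?thesis
  proof (rule bij_betw_byWitness[where f' = "\<lambda>P. (sum_mset (rest P), rest P)"]; clarsimp)
    fix i Q
    assume Q: "Q \<in> bounded_partitions N i" and "i \<le> n" "Suc N dvd n - i"
    have "{#x \<in># Q. x \<noteq> Suc N#} = Q"
      using Q by (auto simp: bounded_partitions_def filter_mset_eq_conv)
    then show "sum_mset (rest (Q + replicate_mset c (Suc N))) = i \<and> rest (Q + replicate_mset c (Suc N)) = Q"
      for c using Q by (simp add: rest_def bounded_partitions_def int_partitions_def)
    have "(n - i) div Suc N * Suc N = n - i"
      using \<open>Suc N dvd n - i\<close> by (rule dvd_div_mult_self)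
    then show "Q + replicate_mset ((n - i) div Suc N) (Suc N) \<in> bounded_partitions (Suc N) n"
      using Q \<open>i \<le> n\<close> by (auto simp: bounded_partitions_def int_partitions_def)
  next
    fix P
    assume P: "P \<in> bounded_partitions (Suc N) n"
    have split: "rest P + replicate_mset (count P (Suc N)) (Suc N) = P"
      unfolding rest_def by (rule filter_mset_neq_plus_replicate_mset)
    have "sum_mset (rest P + replicate_mset (count P (Suc N)) (Suc N)) =
        sum_mset (rest P) + count P (Suc N) * Suc N"
      by simp
    then have n: "n = sum_mset (rest P) + count P (Suc N) * Suc N"
      using P unfolding split by (simp add: bounded_partitions_def int_partitions_def)
    then show "rest P + replicate_mset ((n - sum_mset (rest P)) div Suc N) (Suc N) = P"
      using split by (metis add_diff_cancel_left' div_mult_self_is_m zero_less_Suc)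
    have "rest P \<in> bounded_partitions N (sum_mset (rest P))"
      using P unfolding rest_def bounded_partitions_def int_partitions_def by (auto simp: le_Suc_eq)
    then show "sum_mset (rest P) \<le> n \<and> Suc N dvd n - sum_mset (rest P) \<and>
        rest P \<in> bounded_partitions N (sum_mset (rest P))"
      using n by (metis le_add1 add_diff_cancel_left' dvd_triv_right)
  qed
qed

lemma card_bounded_partitions_Suc:
  "card (bounded_partitions (Suc N) n) =
    (\<Sum>i=0..n. if Suc N dvd n - i then card (bounded_partitions N i) else 0)"
proof -
  have "card (bounded_partitions (Suc N) n) =
      card (SIGMA i:{i\<in>{0..n}. Suc N dvd n - i}. bounded_partitions N i)"
    using bij_betw_same_card[OF bij_betw_bounded_partitions_Suc] by simp
  also have "\<dots> = (\<Sum>i\<in>{i\<in>{0..n}. Suc N dvd n - i}. card (bounded_partitions N i))"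
    by (simp add: finite_bounded_partitions)
  also have "\<dots> = (\<Sum>i=0..n. if Suc N dvd n - i then card (bounded_partitions N i) else 0)"
    by (rule sum.inter_filter) simp
  finally show ?thesis .
qed

definition fps_multiples :: "nat \<Rightarrow> 'a::{zero,one} fps" where
  "fps_multiples d = Abs_fps (\<lambda>k. if d dvd k then 1 else 0)"

lemma fps_multiples_nth [simp]: "fps_multiples d $ k = (if d dvd k then 1 else 0)"
  by (simp add: fps_multiples_def)

lemma one_minus_fps_X_power_mult_fps_multiples:
  assumes "0 < d"
  shows "(1 - fps_X ^ d) * fps_multiples d = (1 :: 'a::comm_ring_1 fps)"
proof (rule fps_ext)
  fix k
  have "d dvd k \<longleftrightarrow> k = 0" if "k < d"
    using that by (auto dest: dvd_imp_le)
  moreover have "d dvd k \<longleftrightarrow> d dvd k - d" if "d \<le> k"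
    using that by (simp add: dvd_minus_self)
  moreover have "((1 - fps_X ^ d) * fps_multiples d :: 'a fps) $ k =
      fps_multiples d $ k - (fps_X ^ d * fps_multiples d :: 'a fps) $ k"
    by (simp add: left_diff_distrib)
  ultimately show "((1 - fps_X ^ d) * fps_multiples d) $ k = (1 :: 'a fps) $ k"
    using assms by (cases "k < d") (auto simp: fps_X_power_mult_nth)
qed

lemma fps_nth_prod_fps_multiples:
  "(\<Prod>i=1..N. fps_multiples i :: 'a::comm_semiring_1 fps) $ n = of_nat (card (bounded_partitions N n))"
proof (induction N arbitrary: n)
  case 0
  then show ?case
    by (simp add: bounded_partitions_0)
next
  case (Suc N)
  have "(\<Prod>i=1..Suc N. fps_multiples i :: 'a fps) $ n =
      (\<Sum>i=0..n. (\<Prod>i=1..N. fps_multiples i :: 'a fps) $ i * fps_multiples (Suc N) $ (n - i))"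
    by (simp add: fps_mult_nth)
  also have "\<dots> = of_nat (\<Sum>i=0..n. if Suc N dvd n - i then card (bounded_partitions N i) else 0)"
    by (simp only: Suc.IH fps_multiples_nth) (simp add: of_nat_sum if_distrib cong: if_cong)
  also have "\<dots> = of_nat (card (bounded_partitions (Suc N) n))"
    by (simp only: card_bounded_partitions_Suc)
  finally show ?case .
qed

lemma sum_omega_card_int_partitions:
  assumes "1 \<le> n"
  shows "(\<Sum>d=1..n. omega (int n - int d) * int (card (int_partitions d))) = - omega (int n)"
proof -
  have "(\<Prod>i=1..n. 1 - fps_X ^ i) * (\<Prod>i=1..n. fps_multiples i) =
      (\<Prod>i=1..n. (1 - fps_X ^ i) * fps_multiples i :: int fps)"
    by (simp add: prod.distrib)
  also have "\<dots> = 1"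
    by (intro prod.neutral) (simp add: one_minus_fps_X_power_mult_fps_multiples)
  finally have "0 = ((\<Prod>i=1..n. 1 - fps_X ^ i) * (\<Prod>i=1..n. fps_multiples i) :: int fps) $ n"
    using assms by simp
  also have "\<dots> = (\<Sum>i=0..n. omega (int i) * int (card (int_partitions (n - i))))"
    unfolding fps_mult_nth
    by (intro sum.cong refl, simp only: atLeastAtMost_iff diff_le_self of_int_eq_id id_apply fps_nth_euler_product
        fps_nth_prod_fps_multiples bounded_partitions_eq_int_partitions)
  also have "\<dots> = (\<Sum>d=0..n. omega (int n - int d) * int (card (int_partitions d)))"
    by (subst sum.atLeastAtMost_rev) (simp add: of_nat_diff)
  also have "\<dots> = omega (int n) + (\<Sum>d=1..n. omega (int n - int d) * int (card (int_partitions d)))"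
    by (simp add: sum.atLeast_Suc_atMost int_partitions_0)
  finally show ?thesis
    by simp
qed

section \<open>Relatively prime partitions\<close>

lemma sum_mset_image_mset_mult:
  fixes c :: "'a::semiring_0"
  shows "sum_mset (image_mset ((*) c) P) = c * sum_mset P"
  by (induction P) (simp_all add: distrib_left)

definition primitive_mset :: "nat multiset \<Rightarrow> nat multiset" where
  "primitive_mset P = image_mset (\<lambda>x. x div Gcd (set_mset P)) P"

lemma image_mset_mult_primitive_mset: "image_mset ((*) (Gcd (set_mset P))) (primitive_mset P) = P"
  by (simp add: primitive_mset_def multiset.map_comp o_def Gcd_dvd multiset.map_ident_strong)

lemma Gcd_primitive_mset:
  assumes "Gcd (set_mset P) \<noteq> 0"
  shows "Gcd (set_mset (primitive_mset P)) = 1"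
proof -
  let ?g = "Gcd (set_mset P)"
  have "?g * Gcd (set_mset (primitive_mset P)) = ?g * 1"
    using Gcd_mult[of ?g "set_mset (primitive_mset P)"]
    by (simp only: set_image_mset[symmetric] image_mset_mult_primitive_mset) auto
  then show ?thesis
    using mult_left_cancel[OF assms] by blast
qed

lemma primitive_mset_image_mset_mult:
  assumes "0 < c" "Gcd (set_mset Q) = 1"
  shows "primitive_mset (image_mset ((*) c) Q) = Q"
  using assms by (simp add: primitive_mset_def Gcd_mult multiset.map_comp o_def)

definition relprime_partitions :: "nat \<Rightarrow> nat multiset set" where
  "relprime_partitions n = {P \<in> int_partitions n. Gcd (set_mset P) = 1}"

lemma finite_relprime_partitions: "finite (relprime_partitions n)"
  unfolding relprime_partitions_def using finite_int_partitions by simp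

lemma primitive_mset_int_partition:
  assumes "P \<in> int_partitions n" "0 < n"
  shows "0 < Gcd (set_mset P)" "n = Gcd (set_mset P) * sum_mset (primitive_mset P)"
    "primitive_mset P \<in> relprime_partitions (sum_mset (primitive_mset P))"
proof -
  have pos: "\<forall>x\<in>#P. 0 < x" and sum: "sum_mset P = n"
    using assms(1) by (simp_all add: int_partitions_def)
  then obtain x where "x \<in># P"
    using assms(2) by fastforce
  then show g: "0 < Gcd (set_mset P)"
    using pos by (metis Gcd_0_iff bot_nat_0.not_eq_extremum singletonD subset_eq)
  show "n = Gcd (set_mset P) * sum_mset (primitive_mset P)"
    using sum image_mset_mult_primitive_mset[of P] sum_mset_image_mset_mult by metis
  have "Gcd (set_mset P) \<le> x" if "x \<in># P" for x
    using that pos by (simp add: Gcd_dvd dvd_imp_le)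
  then have "\<forall>x\<in>#primitive_mset P. 0 < x"
    using g by (auto simp: primitive_mset_def div_greater_zero_iff)
  moreover have "Gcd (set_mset (primitive_mset P)) = 1"
    using g by (intro Gcd_primitive_mset) linarith
  ultimately show "primitive_mset P \<in> relprime_partitions (sum_mset (primitive_mset P))"
    by (simp add: relprime_partitions_def int_partitions_def)
qed

lemma image_mset_mult_relprime_partition:
  assumes "Q \<in> relprime_partitions m" "0 < c"
  shows "image_mset ((*) c) Q \<in> int_partitions (c * m)"
  using assms by (auto simp: relprime_partitions_def int_partitions_def sum_mset_image_mset_mult)

lemma bij_betw_int_partitions_divisors:
  assumes "0 < n"
  shows "bij_betw (\<lambda>(m, Q). image_mset ((*) (n div m)) Q)
     (SIGMA m:{m\<in>{1..n}. m dvd n}. relprime_partitions m) (int_partitions n)"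
proof (rule bij_betw_byWitness[where f' = "\<lambda>P. (sum_mset (primitive_mset P), primitive_mset P)"]; clarsimp)
  fix m Q
  assume Q: "Q \<in> relprime_partitions m" and "m dvd n"
  then have c: "0 < n div m" "n div m * m = n"
    using assms by (auto elim: dvdE)
  show "sum_mset (primitive_mset (image_mset ((*) (n div m)) Q)) = m \<and>
      primitive_mset (image_mset ((*) (n div m)) Q) = Q"
    using Q c primitive_mset_image_mset_mult by (simp add: relprime_partitions_def int_partitions_def)
  show "image_mset ((*) (n div m)) Q \<in> int_partitions n"
    using image_mset_mult_relprime_partition[OF Q c(1)] c(2) by simp
next
  fix P
  assume "P \<in> int_partitions n"
  note primitive = primitive_mset_int_partition[OF this assms]
  then show "image_mset ((*) (n div sum_mset (primitive_mset P))) (primitive_mset P) = P"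
    using image_mset_mult_primitive_mset[of P] assms
    by (metis nonzero_mult_div_cancel_right mult_is_0 bot_nat_0.not_eq_extremum)
  show "Suc 0 \<le> sum_mset (primitive_mset P) \<and> sum_mset (primitive_mset P) \<le> n \<and>
      sum_mset (primitive_mset P) dvd n \<and> primitive_mset P \<in> relprime_partitions (sum_mset (primitive_mset P))"
    using primitive assms by (metis Suc_leI bot_nat_0.not_eq_extremum dvd_imp_le dvd_triv_right mult_0_right)
qed

lemma card_int_partitions_eq_sum_p_psi:
  assumes "0 < n"
  shows "card (int_partitions n) = (\<Sum>m | m \<in> {1..n} \<and> m dvd n. p_psi m)"
proof -
  have "card (int_partitions n) = card (SIGMA m:{m\<in>{1..n}. m dvd n}. relprime_partitions m)"
    using bij_betw_same_card[OF bij_betw_int_partitions_divisors[OF assms]] by simp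
  also have "\<dots> = (\<Sum>m | m \<in> {1..n} \<and> m dvd n. card (relprime_partitions m))"
    by (simp add: finite_relprime_partitions)
  also have "\<dots> = (\<Sum>m | m \<in> {1..n} \<and> m dvd n. p_psi m)"
    by (simp add: p_psi_def relprime_partitions_def)
  finally show ?thesis .
qed

theorem mainTheorem8:
  fixes n :: nat
  assumes "1 \<le> n"
  shows "- omega (int n) = (\<Sum>m = 1..n. int (p_psi m) * Omega m (int n - int m))"
proof -
  have "(\<Sum>m=1..n. int (p_psi m) * Omega m (int n - int m)) =
      (\<Sum>m=1..n. \<Sum>d | d \<in> {1..n} \<and> m dvd d. int (p_psi m) * omega (int n - int d))"
    by (intro sum.cong refl) (simp add: Omega_eq_sum_multiples sum_distrib_left)
  also have "\<dots> = (\<Sum>d=1..n. \<Sum>m | m \<in> {1..n} \<and> m dvd d. int (p_psi m) * omega (int n - int d))"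
    by (rule sum.swap_restrict) auto
  also have "\<dots> = (\<Sum>d=1..n. omega (int n - int d) * int (card (int_partitions d)))"
  proof (rule sum.cong[OF refl])
    fix d
    assume d: "d \<in> {1..n}"
    then have "{m. m \<in> {1..n} \<and> m dvd d} = {m. m \<in> {1..d} \<and> m dvd d}"
      by (auto dest: dvd_imp_le)
    then show "(\<Sum>m | m \<in> {1..n} \<and> m dvd d. int (p_psi m) * omega (int n - int d)) =
        omega (int n - int d) * int (card (int_partitions d))"
      using d by (simp add: card_int_partitions_eq_sum_p_psi of_nat_sum sum_distrib_left mult.commute)
  qed
  also have "\<dots> = - omega (int n)"
    using assms by (rule sum_omega_card_int_partitions)
  finally show ?thesis
    by simp
qed

end
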